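(* Let $L$ be a $\kappa$-frame. Every congruence $C\in\mathbb{C}L$ is a meet of clear congruences; namely $C=\bigwedge\{\partial_I\mid I\in\mathfrak{H}_\kappa L,\ \partial_I\ge C\}$.
   Context: $\kappa$ is a fixed regular cardinal; a $\kappa$-frame is a bounded distributive lattice having joins of all subsets of cardinality $<\kappa$ and satisfying the frame distributive law for such joins. A $\kappa$-ideal is a downset in which every subset of cardinality $<\kappa$ has an upper bound; $\mathfrak{H}_\kappa L$ is the set of $\kappa$-ideals. A congruence is an equivalence relation that is a sub-$\kappa$-frame of $L\times L$; $\mathbb{C}L$ is the frame of congruences under inclusion. For a $\kappa$-ideal $I$, $\partial_I=\{(a,b)\in L\times L\mid \forall x\in L:\ a\wedge x\in I\iff b\wedge x\in I\}$; a congruence is clear if it equals $\partial_I$ for some $\kappa$-ideal $I$. *)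

theory Defs
  imports Main
begin

definition regular_cardinal :: "'k rel \<Rightarrow> bool" where
  "regular_cardinal \<kappa> \<longleftrightarrow> Card_order \<kappa> \<and> Cinfinite \<kappa> \<and> regularCard \<kappa>"

definition small :: "'k rel \<Rightarrow> 'a set \<Rightarrow> bool" where
  "small \<kappa> S \<longleftrightarrow> ordLess2 (card_of S) \<kappa>"

definition is_lub :: "'a::order set \<Rightarrow> 'a \<Rightarrow> bool" where
  "is_lub S s \<longleftrightarrow> (\<forall>x\<in>S. x \<le> s) \<and> (\<forall>u. (\<forall>x\<in>S. x \<le> u) \<longrightarrow> s \<le> u)"

definition kjoin :: "'a::order set \<Rightarrow> 'a" where
  "kjoin S = (THE s. is_lub S s)"

definition kframe :: "'k rel \<Rightarrow> 'a::{distrib_lattice,bounded_lattice} itself \<Rightarrow> bool" where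
  "kframe \<kappa> _ \<longleftrightarrow>
     (\<forall>S::'a set. small \<kappa> S \<longrightarrow> (\<exists>s. is_lub S s)) \<and>
     (\<forall>(a::'a) S. small \<kappa> S \<longrightarrow> inf a (kjoin S) = kjoin ((\<lambda>s. inf a s) ` S))"

definition kideal :: "'k rel \<Rightarrow> 'a::order set \<Rightarrow> bool" where
  "kideal \<kappa> I \<longleftrightarrow>
     (\<forall>x y. y \<in> I \<longrightarrow> x \<le> y \<longrightarrow> x \<in> I) \<and>
     (\<forall>S. S \<subseteq> I \<longrightarrow> small \<kappa> S \<longrightarrow> (\<exists>u\<in>I. \<forall>x\<in>S. x \<le> u))"

definition congruence :: "'k rel \<Rightarrow> ('a::{distrib_lattice,bounded_lattice} \<times> 'a) set \<Rightarrow> bool" where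
  "congruence \<kappa> C \<longleftrightarrow>
     equiv UNIV C \<and>
     (bot, bot) \<in> C \<and> (top, top) \<in> C \<and>
     (\<forall>a b c d. (a, b) \<in> C \<longrightarrow> (c, d) \<in> C \<longrightarrow> (inf a c, inf b d) \<in> C) \<and>
     (\<forall>S. S \<subseteq> C \<longrightarrow> small \<kappa> S \<longrightarrow> (kjoin (fst ` S), kjoin (snd ` S)) \<in> C)"

definition partial_I :: "'a::lattice set \<Rightarrow> ('a \<times> 'a) set" where
  "partial_I I = {(a, b). \<forall>x. inf a x \<in> I \<longleftrightarrow> inf b x \<in> I}"

end

theory Submission
  imports Defs
begin

text \<open>For each \<open>b\<close>, the elements \<open>x\<close> with \<open>x \<equiv> x \<sqinter> b\<close> modulo \<open>C\<close> form a
  \<open>\<kappa>\<close>-ideal \<open>I\<^sub>b\<close> (closure under small joins is exactly where the frame distributive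
  law and the join-compatibility of \<open>C\<close> enter), and \<open>C \<subseteq> \<partial>\<^bsub>I\<^sub>b\<^esub>\<close> since \<open>C\<close>
  respects meets. If \<open>(a, b)\<close> lies in every clear congruence above \<open>C\<close>, testing
  \<open>\<partial>\<^bsub>I\<^sub>b\<^esub>\<close> at \<open>x = \<top>\<close> gives \<open>a \<equiv> a \<sqinter> b\<close>, and symmetrically \<open>b \<equiv> a \<sqinter> b\<close>;
  hence \<open>a \<equiv> b\<close>.\<close>

lemma is_lub_kjoin:
  assumes "\<exists>s. is_lub S s"
  shows "is_lub S (kjoin S)"
proof -
  obtain s where s: "is_lub S s" using assms by blast
  have "t = s" if "is_lub S t" for t
    using s that unfolding is_lub_def by (meson order_antisym)
  with s show ?thesis unfolding kjoin_def by (rule theI)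
qed

lemma small_image:
  assumes "small \<kappa> S"
  shows "small \<kappa> (f ` S)"
  using assms card_of_image ordLeq_ordLess_trans unfolding small_def by blast

context
  fixes \<kappa> :: "'k rel" and C :: "('a::{distrib_lattice,bounded_lattice} \<times> 'a) set"
  assumes cong: "congruence \<kappa> C"
begin

lemma congruence_refl: "(x, x) \<in> C"
  using cong unfolding congruence_def equiv_def refl_on_def by blast

lemma congruence_sym: "(x, y) \<in> C \<Longrightarrow> (y, x) \<in> C"
  using cong unfolding congruence_def equiv_def by (meson symD)

lemma congruence_trans: "(x, y) \<in> C \<Longrightarrow> (y, z) \<in> C \<Longrightarrow> (x, z) \<in> C"
  using cong unfolding congruence_def equiv_def by (meson transD)

lemma congruence_inf: "(a, b) \<in> C \<Longrightarrow> (c, d) \<in> C \<Longrightarrow> (inf a c, inf b d) \<in> C"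
  using cong unfolding congruence_def by blast

lemma congruence_kjoin: "S \<subseteq> C \<Longrightarrow> small \<kappa> S \<Longrightarrow> (kjoin (fst ` S), kjoin (snd ` S)) \<in> C"
  using cong unfolding congruence_def by blast

lemma congruence_inf_right: "(a, b) \<in> C \<Longrightarrow> (inf a x, inf b x) \<in> C"
  by (simp add: congruence_inf congruence_refl)

end

definition cong_below :: "('a::lattice \<times> 'a) set \<Rightarrow> 'a \<Rightarrow> 'a set" where
  "cong_below C b = {x. (x, inf x b) \<in> C}"

lemma cong_below_downward_closed:
  assumes "congruence \<kappa> C" and "y \<in> cong_below C b" and "x \<le> y"
  shows "x \<in> cong_below C b"
proof -
  have "(inf x y, inf x (inf y b)) \<in> C"
    using assms(2) congruence_inf[OF assms(1) congruence_refl[OF assms(1)]]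
    by (simp add: cong_below_def)
  with \<open>x \<le> y\<close> show ?thesis
    by (simp add: cong_below_def inf_absorb1 inf_assoc[symmetric])
qed

lemma cong_below_kjoin:
  fixes C :: "('a::{distrib_lattice,bounded_lattice} \<times> 'a) set"
  assumes fr: "kframe \<kappa> TYPE('a)" and cong: "congruence \<kappa> C"
    and S: "S \<subseteq> cong_below C b" "small \<kappa> S"
  shows "kjoin S \<in> cong_below C b"
proof -
  define T where "T = (\<lambda>x. (x, inf b x)) ` S"
  have "T \<subseteq> C" using S(1) unfolding T_def cong_below_def by (auto simp: inf_commute)
  moreover have "small \<kappa> T" unfolding T_def using S(2) by (rule small_image)
  ultimately have "(kjoin (fst ` T), kjoin (snd ` T)) \<in> C" by (rule congruence_kjoin[OF cong])
  moreover have "fst ` T = S" "snd ` T = inf b ` S" unfolding T_def by force+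
  moreover have "inf b (kjoin S) = kjoin (inf b ` S)" using fr S(2) unfolding kframe_def by blast
  ultimately show ?thesis by (simp add: cong_below_def inf_commute)
qed

lemma kideal_cong_below:
  fixes C :: "('a::{distrib_lattice,bounded_lattice} \<times> 'a) set"
  assumes fr: "kframe \<kappa> TYPE('a)" and cong: "congruence \<kappa> C"
  shows "kideal \<kappa> (cong_below C b)"
  unfolding kideal_def
proof (intro conjI allI impI)
  show "x \<in> cong_below C b" if "y \<in> cong_below C b" "x \<le> y" for x y
    using cong_below_downward_closed[OF cong that] .
  fix S assume S: "S \<subseteq> cong_below C b" "small \<kappa> S"
  then have "is_lub S (kjoin S)" using fr is_lub_kjoin unfolding kframe_def by blast
  with cong_below_kjoin[OF fr cong S]
  show "\<exists>u\<in>cong_below C b. \<forall>x\<in>S. x \<le> u" unfolding is_lub_def by blast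
qed

lemma congruence_subset_partial_I_cong_below:
  assumes "congruence \<kappa> C"
  shows "C \<subseteq> partial_I (cong_below C b)"
proof (clarify)
  fix c d assume cd: "(c, d) \<in> C"
  have "(inf c x, inf (inf c x) b) \<in> C \<longleftrightarrow> (inf d x, inf (inf d x) b) \<in> C" for x
  proof -
    have "(inf c x, inf d x) \<in> C" using congruence_inf_right[OF assms cd] .
    moreover then have "(inf (inf c x) b, inf (inf d x) b) \<in> C"
      by (rule congruence_inf_right[OF assms])
    ultimately show ?thesis
      using congruence_sym[OF assms] congruence_trans[OF assms] by blast
  qed
  then show "(c, d) \<in> partial_I (cong_below C b)"
    unfolding partial_I_def cong_below_def by simp
qed

lemma partial_I_cong_below_top:
  assumes "congruence \<kappa> C" and "(a, b) \<in> partial_I (cong_below C b)"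
  shows "(a, inf a b) \<in> C"
proof -
  have "inf b top \<in> cong_below C b"
    by (simp add: cong_below_def congruence_refl[OF assms(1)])
  with assms(2) have "inf a top \<in> cong_below C b" unfolding partial_I_def by blast
  then show ?thesis by (simp add: cong_below_def)
qed

lemma partial_I_sym: "(a, b) \<in> partial_I I \<Longrightarrow> (b, a) \<in> partial_I I"
  unfolding partial_I_def by blast

theorem mainTheorem10:
  fixes \<kappa> :: "'k rel" and C :: "('a::{distrib_lattice,bounded_lattice} \<times> 'a) set"
  assumes "regular_cardinal \<kappa>"
    and "kframe \<kappa> TYPE('a)"
    and "congruence \<kappa> C"
  shows "C = \<Inter> {partial_I I | I. kideal \<kappa> I \<and> C \<subseteq> partial_I I}"
proof
  show "\<Inter> {partial_I I | I. kideal \<kappa> I \<and> C \<subseteq> partial_I I} \<subseteq> C"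
  proof (clarify)
    fix a b assume ab: "(a, b) \<in> \<Inter> {partial_I I | I. kideal \<kappa> I \<and> C \<subseteq> partial_I I}"
    have clear: "(a, b) \<in> partial_I (cong_below C z)" for z
      using ab kideal_cong_below[OF assms(2,3)] congruence_subset_partial_I_cong_below[OF assms(3)]
      by blast
    have "(a, inf a b) \<in> C"
      using partial_I_cong_below_top[OF assms(3) clear] .
    moreover have "(b, inf b a) \<in> C"
      using partial_I_cong_below_top[OF assms(3) partial_I_sym[OF clear]] .
    ultimately show "(a, b) \<in> C"
      using congruence_sym[OF assms(3)] congruence_trans[OF assms(3)] by (metis inf_commute)
  qed
qed blast

end
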